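(* Let $p$ be a prime. Define $$\Phi:\mathbb{Z}_p[X_0,X_1;Y_0,Y_1]_{22}\to\mathbb{Z}_p[X_0,X_1]_2\times\mathbb{Z}_p[X_0,X_1]_4,\qquad F_0Y_0^2+F_1Y_0Y_1+F_2Y_1^2\mapsto(F_1,-F_0F_2),$$ where $F_0,F_1,F_2\in\mathbb{Z}_p[X_0,X_1]_2$, and let $\Phi_p$ be the analogous map on forms with coefficients in $\mathbb{F}_p$. Let $\overline F\in\mathbb{F}_p[X_0,X_1;Y_0,Y_1]_{22}$ be either (i) $\overline F=f(X_0Y_0,X_0Y_1+X_1Y_0)$ with $f$ an irreducible binary quadratic form over $\mathbb{F}_p$, or (ii) $\overline F=(X_0Y_1-X_1Y_0)^2$. Then $\Phi$ restricts to a measure-preserving map $$\{F\in\mathbb{Z}_p[X_0,X_1;Y_0,Y_1]_{22}:F\equiv\overline F\ (\mathrm{mod}\ p)\}\to\{G\in\mathbb{Z}_p[X_0,X_1]_2\times\mathbb{Z}_p[X_0,X_1]_4:G\equiv\Phi_p(\overline F)\ (\mathrm{mod}\ p)\}.$$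
   Context: $\mathbb{Z}_p[X_0,X_1]_d$ denotes binary forms of degree $d$ over $\mathbb{Z}_p$, and $\mathbb{Z}_p[X_0,X_1;Y_0,Y_1]_{22}$ denotes forms homogeneous of degree 2 in $(X_0,X_1)$ and of degree 2 in $(Y_0,Y_1)$; these are identified with $\mathbb{Z}_p^3$, $\mathbb{Z}_p^5$ and $\mathbb{Z}_p^9$ via coefficients and carry Haar measure, and the two residue classes above are given the (normalized) restrictions of these Haar measures. *)

theory Defs
  imports "HOL-Probability.Probability"
begin

text \<open>A p-adic integer is represented by its compatible system of residues:
  x n \<in> {0..<p^n} is the residue of x modulo p^n, and x (Suc n) mod p^n = x n.\<close>

definition Zp :: "nat \<Rightarrow> (nat \<Rightarrow> int) set" where
  "Zp p = {x. \<forall>n. 0 \<le> x n \<and> x n < int p ^ n \<and> x (Suc n) mod (int p ^ n) = x n}"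

definition from_digits :: "nat \<Rightarrow> (nat \<Rightarrow> int) \<Rightarrow> (nat \<Rightarrow> int)" where
  "from_digits p d = (\<lambda>n. \<Sum>i<n. d i * int p ^ i)"

text \<open>Normalised Haar measure on Z_p: the image of the product of uniform
  measures on the digits {0..p-1}.  Ambient measurable space: nat \<Rightarrow> int with the
  product of discrete sigma-algebras.\<close>
definition haar_Zp :: "nat \<Rightarrow> (nat \<Rightarrow> int) measure" where
  "haar_Zp p = distr (PiM UNIV (\<lambda>_. uniform_count_measure {0..<int p}))
                     (PiM UNIV (\<lambda>_. count_space UNIV)) (from_digits p)"

definition haar_Zp_vec :: "nat \<Rightarrow> nat \<Rightarrow> (nat \<Rightarrow> nat \<Rightarrow> int) measure" where
  "haar_Zp_vec p m = PiM {..<m} (\<lambda>_. haar_Zp p)"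

definition residue_class :: "nat \<Rightarrow> nat \<Rightarrow> (nat \<Rightarrow> int) \<Rightarrow> (nat \<Rightarrow> nat \<Rightarrow> int) set" where
  "residue_class p m c = {x \<in> PiE {..<m} (\<lambda>_. Zp p). \<forall>j<m. x j 1 = c j mod int p}"

definition measure_preserving_map :: "'a measure \<Rightarrow> 'b measure \<Rightarrow> ('a \<Rightarrow> 'b) \<Rightarrow> bool" where
  "measure_preserving_map M N f \<longleftrightarrow> f \<in> measurable M N \<and> distr M N f = N"

text \<open>A form F = F0 Y0^2 + F1 Y0 Y1 + F2 Y1^2 of bidegree (2,2)
  with F_k = c(3k) X0^2 + c(3k+1) X0 X1 + c(3k+2) X1^2 is the vector c 0 .. c 8.
  A pair (G2, G4) of binary forms of degrees 2 and 4 is the vector d 0 .. d 7 with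
  G2 = d0 X0^2 + d1 X0 X1 + d2 X1^2 and G4 = d3 X0^4 + d4 X0^3 X1 + ... + d7 X1^4.
  phi_poly is Phi: F \<mapsto> (F1, - F0 F2), as integer polynomials in the coefficients.\<close>
definition phi_poly :: "(nat \<Rightarrow> int) \<Rightarrow> nat \<Rightarrow> int" where
  "phi_poly c i =
     (if i = 0 then c 3 else if i = 1 then c 4 else if i = 2 then c 5
      else if i = 3 then - (c 0 * c 6)
      else if i = 4 then - (c 0 * c 7 + c 1 * c 6)
      else if i = 5 then - (c 0 * c 8 + c 1 * c 7 + c 2 * c 6)
      else if i = 6 then - (c 1 * c 8 + c 2 * c 7)
      else if i = 7 then - (c 2 * c 8) else 0)"

definition Phi :: "nat \<Rightarrow> (nat \<Rightarrow> nat \<Rightarrow> int) \<Rightarrow> (nat \<Rightarrow> nat \<Rightarrow> int)" where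
  "Phi p x = (\<lambda>i\<in>{..<8}. \<lambda>n. phi_poly (\<lambda>j. x j n) i mod (int p ^ n))"

definition irreducible_bqf_mod :: "nat \<Rightarrow> int \<Rightarrow> int \<Rightarrow> int \<Rightarrow> bool" where
  "irreducible_bqf_mod p a b c \<longleftrightarrow>
     \<not> (\<exists>r s t u :: int. a mod int p = (r * t) mod int p \<and> b mod int p = (r * u + s * t) mod int p
                        \<and> c mod int p = (s * u) mod int p)"

text \<open>f(X0 Y0, X0 Y1 + X1 Y0) for f(U,V) = a U^2 + b U V + c V^2:
  F0 = a X0^2 + b X0 X1 + c X1^2, F1 = b X0^2 + 2c X0 X1, F2 = c X0^2.\<close>
definition Fbar_i :: "int \<Rightarrow> int \<Rightarrow> int \<Rightarrow> nat \<Rightarrow> int" where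
  "Fbar_i a b c = (\<lambda>j. if j = 0 then a else if j = 1 then b else if j = 2 then c
                      else if j = 3 then b else if j = 4 then 2 * c
                      else if j = 6 then c else 0)"

text \<open>(X0 Y1 - X1 Y0)^2: F0 = X1^2, F1 = -2 X0 X1, F2 = X0^2.\<close>
definition Fbar_ii :: "nat \<Rightarrow> int" where
  "Fbar_ii = (\<lambda>j. if j = 2 then 1 else if j = 4 then -2 else if j = 6 then 1 else 0)"

end

theory Submission
  imports Defs "HOL-Number_Theory.Cong"
begin

text \<open>The differential of \<open>\<Phi>\<close> at \<open>Fbar\<close> is surjective modulo \<open>p\<close>: in both cases the
  linearised system \<open>D\<Phi>(t) = e\<close> can be solved explicitly and has exactly \<open>p\<close> solutions
  \<open>t \<in> \<bbbF>\<^sub>p\<^sup>9\<close> for every \<open>e \<in> \<bbbF>\<^sub>p\<^sup>8\<close> (in case (i) one divides by the coefficient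
  \<open>c\<close> of \<open>f\<close>, a unit since \<open>f\<close> is irreducible). By Hensel lifting, every residue modulo
  \<open>p\<^sup>n\<^sup>+\<^sup>1\<close> in the target class then has exactly \<open>p\<^sup>n\<close> preimages modulo \<open>p\<^sup>n\<^sup>+\<^sup>1\<close>
  in the source class. Counting residues, the pushforward of the normalised Haar measure
  agrees with the normalised Haar measure on all cylinder sets, which are stable under
  intersection and generate the \<open>\<sigma>\<close>-algebra.\<close>

lemma card_eq_card_times_fiber_card:
  assumes "finite A" "finite B" "f ` A \<subseteq> B" "\<And>b. b \<in> B \<Longrightarrow> card {a \<in> A. f a = b} = k"
  shows "card A = card B * k"
proof -
  have "card A = (\<Sum>b\<in>B. card {a \<in> A. f a = b})"
    using sum_fun_comp[of A B f "\<lambda>_. 1 :: nat"] assms(1-3) by simp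
  then show ?thesis
    using assms(4) by simp
qed

lemma card_eq_card_if_coordinate_parametrizes:
  assumes "\<And>t. t \<in> A \<Longrightarrow> t k \<in> S \<and> f (t k) = t"
    and "\<And>s. s \<in> S \<Longrightarrow> f s \<in> A \<and> f s k = s"
  shows "card A = card S"
proof -
  have "bij_betw (\<lambda>t. t k) A S"
    by (rule bij_betw_byWitness[where f' = f]) (use assms in auto)
  then show ?thesis
    by (rule bij_betw_same_card)
qed

lemma cong_minus_left_iff:
  fixes x y m :: int
  shows "[- x = y] (mod m) \<longleftrightarrow> [x = - y] (mod m)"
  by (metis cong_minus_minus_iff minus_minus)

lemma cong_minus_diff_left_iff:
  fixes x a y m :: int
  shows "[- x - a = y] (mod m) \<longleftrightarrow> [x = - y - a] (mod m)"
proof -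
  have "x - (- y - a) = - (- x - a - y)"
    by simp
  then show ?thesis
    unfolding cong_iff_dvd_diff by (simp only: dvd_minus_iff)
qed

lemma cong_minus_mult_diff_left_iff:
  fixes c v x r y m :: int
  assumes v: "[c * v = 1] (mod m)"
  shows "[- (c * x) - r = y] (mod m) \<longleftrightarrow> [x = (- y - r) * v] (mod m)"
proof -
  have "[- (c * x) - r = y] (mod m) \<longleftrightarrow> [c * x = - y - r] (mod m)"
    by (rule cong_minus_diff_left_iff)
  also have "\<dots> \<longleftrightarrow> [x = (- y - r) * v] (mod m)"
  proof
    assume "[c * x = - y - r] (mod m)"
    then have "[v * (c * x) = v * (- y - r)] (mod m)"
      by (rule cong_scalar_left)
    moreover have "[v * (c * x) = x] (mod m)"
      using cong_scalar_right[OF v, of x] by (simp add: ac_simps)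
    ultimately show "[x = (- y - r) * v] (mod m)"
      by (metis cong_sym cong_trans mult.commute)
  next
    assume "[x = (- y - r) * v] (mod m)"
    then have "[c * x = (- y - r) * (c * v)] (mod m)"
      using cong_scalar_left[of x "(- y - r) * v" m c] by (simp add: ac_simps)
    moreover have "[(- y - r) * (c * v) = - y - r] (mod m)"
      using cong_scalar_left[OF v, of "- y - r"] by simp
    ultimately show "[c * x = - y - r] (mod m)"
      by (rule cong_trans)
  qed
  finally show ?thesis .
qed

lemma eq_mod_if_cong:
  fixes x y m :: int
  assumes "x \<in> {0..<m}" and "[x = y] (mod m)"
  shows "x = y mod m"
  using assms unfolding cong_def by simp

lemma div_in_atLeastLessThan:
  fixes x q P :: int
  assumes "q > 0" and "x \<in> {0..<q * P}"
  shows "x div q \<in> {0..<P}"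
proof -
  have "q * (x div q) \<le> x"
    using assms(1) by (metis mult_div_mod_eq le_add_same_cancel1 pos_mod_sign)
  then have "q * (x div q) < q * P"
    using assms(2) by simp
  then show ?thesis
    using assms by (simp add: pos_imp_zdiv_nonneg_iff)
qed

definition vec_mod :: "int \<Rightarrow> nat \<Rightarrow> (nat \<Rightarrow> int) \<Rightarrow> nat \<Rightarrow> int" where
  "vec_mod q m w = (\<lambda>j\<in>{..<m}. w j mod q)"

lemma vec_mod_in_PiE:
  assumes "q > 0"
  shows "vec_mod q m f \<in> PiE {..<m} (\<lambda>_. {0..<q})"
  using assms unfolding vec_mod_def by auto

lemma vec_mod_cong:
  assumes "j < m"
  shows "[vec_mod q m f j = f j] (mod q)"
  using assms unfolding vec_mod_def cong_def by simp

lemma vec_mod_idem: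
  assumes "z \<in> PiE {..<m} (\<lambda>_. {0..<q})"
  shows "vec_mod q m z = z"
  using assms unfolding vec_mod_def by (auto simp: PiE_iff extensional_def fun_eq_iff)

lemma vec_mod_eq_vec_mod_iff:
  "vec_mod q m f = vec_mod q m g \<longleftrightarrow> (\<forall>i<m. [f i = g i] (mod q))"
  unfolding vec_mod_def cong_def by (auto simp: fun_eq_iff)

lemma vec_mod_eq_iff:
  assumes "z \<in> PiE {..<m} (\<lambda>_. {0..<q})"
  shows "vec_mod q m f = z \<longleftrightarrow> (\<forall>i<m. [f i = z i] (mod q))"
  using vec_mod_eq_vec_mod_iff[of q m f z] vec_mod_idem[OF assms] by simp

section \<open>The polynomial map \<open>\<Phi>\<close> and its differential\<close>

lemma phi_poly_restrict [simp]: "phi_poly (restrict c {..<9}) = phi_poly c"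
  unfolding phi_poly_def by (auto simp: fun_eq_iff)

lemma phi_poly_cong:
  assumes "\<And>j. j < 9 \<Longrightarrow> [a j = b j] (mod m)"
  shows "[phi_poly a i = phi_poly b i] (mod m)"
  using assms unfolding phi_poly_def
  by (auto intro!: cong_add cong_diff cong_mult cong_minus_minus_iff[THEN iffD2])

text \<open>The components \<open>0..2\<close> of \<^const>\<open>phi_poly\<close> are linear and the components \<open>3..7\<close> are
  quadratic forms, which are differentiated by polarisation.\<close>

definition phi_deriv :: "(nat \<Rightarrow> int) \<Rightarrow> (nat \<Rightarrow> int) \<Rightarrow> nat \<Rightarrow> int" where
  "phi_deriv c t i = (if i < 3 then phi_poly t i
     else phi_poly (\<lambda>j. c j + t j) i - phi_poly c i - phi_poly t i)"

lemma phi_poly_add_mult: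
  "phi_poly (\<lambda>j. c j + q * t j) i =
     phi_poly c i + q * phi_deriv c t i + (if i < 3 then 0 else q\<^sup>2 * phi_poly t i)"
  unfolding phi_deriv_def phi_poly_def by (simp add: algebra_simps power2_eq_square)

lemma phi_deriv_cong:
  assumes "\<And>j. j < 9 \<Longrightarrow> [c j = c' j] (mod m)"
  shows "[phi_deriv c t i = phi_deriv c' t i] (mod m)"
  using assms unfolding phi_deriv_def phi_poly_def
  by (auto intro!: cong_add cong_diff cong_mult cong_minus_minus_iff[THEN iffD2])

lemma phi_poly_lift_cong_iff:
  fixes p q e :: int
  assumes "p dvd q" "q \<noteq> 0" and "\<And>j. j < 9 \<Longrightarrow> [w j = c j] (mod p)"
  shows "[phi_poly (\<lambda>j. w j + q * t j) i = phi_poly w i + q * e] (mod p * q)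
     \<longleftrightarrow> [phi_deriv c t i = e] (mod p)"
proof -
  define X where "X = (if i < 3 then 0 else q\<^sup>2 * phi_poly t i)"
  have "p * q dvd X"
    using assms(1) by (auto simp: X_def power2_eq_square intro: mult_dvd_mono)
  moreover have "phi_poly (\<lambda>j. w j + q * t j) i - (phi_poly w i + q * e)
      = q * (phi_deriv w t i - e) + X"
    by (simp add: phi_poly_add_mult X_def algebra_simps)
  ultimately have "[phi_poly (\<lambda>j. w j + q * t j) i = phi_poly w i + q * e] (mod p * q)
      \<longleftrightarrow> q * p dvd q * (phi_deriv w t i - e)"
    by (simp add: cong_iff_dvd_diff dvd_add_left_iff mult.commute)
  also have "\<dots> \<longleftrightarrow> [phi_deriv w t i = e] (mod p)"
    using assms(2) by (simp add: cong_iff_dvd_diff)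
  also have "\<dots> \<longleftrightarrow> [phi_deriv c t i = e] (mod p)"
    using phi_deriv_cong[OF assms(3)] by (meson cong_sym cong_trans)
  finally show ?thesis .
qed

section \<open>Hensel lifting of the fibres of \<open>\<Phi>\<close>\<close>

definition residue_class_mod :: "nat \<Rightarrow> nat \<Rightarrow> nat \<Rightarrow> (nat \<Rightarrow> int) \<Rightarrow> (nat \<Rightarrow> int) set" where
  "residue_class_mod p m N c =
     {w \<in> PiE {..<m} (\<lambda>_. {0..<int p ^ N}). \<forall>j<m. [w j = c j] (mod int p)}"

definition phi_fiber :: "nat \<Rightarrow> nat \<Rightarrow> (nat \<Rightarrow> int) \<Rightarrow> (nat \<Rightarrow> int) \<Rightarrow> (nat \<Rightarrow> int) set" where
  "phi_fiber p N c z = {w \<in> residue_class_mod p 9 N c. vec_mod (int p ^ N) 8 (phi_poly w) = z}"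

definition deriv_solutions :: "nat \<Rightarrow> (nat \<Rightarrow> int) \<Rightarrow> (nat \<Rightarrow> int) \<Rightarrow> (nat \<Rightarrow> int) set" where
  "deriv_solutions p c e =
     {t \<in> PiE {..<9} (\<lambda>_. {0..<int p}). \<forall>i<8. [phi_deriv c t i = e i] (mod int p)}"

lemma finite_residue_class_mod: "finite (residue_class_mod p m N c)"
  unfolding residue_class_mod_def
  by (rule finite_subset[OF _ finite_PiE[of "{..<m}" "\<lambda>_. {0..<int p ^ N}"]]) auto

lemma finite_phi_fiber: "finite (phi_fiber p N c z)"
  unfolding phi_fiber_def using finite_residue_class_mod by simp

lemma residue_class_mod_1:
  assumes "p > 0"
  shows "residue_class_mod p m 1 c = {vec_mod (int p) m c}"
proof -
  have "w = vec_mod (int p) m c" if w: "w \<in> residue_class_mod p m 1 c" for w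
  proof (rule PiE_ext)
    show "w \<in> PiE {..<m} (\<lambda>_. {0..<int p})"
      using w unfolding residue_class_mod_def by simp
    show "w j = vec_mod (int p) m c j" if "j \<in> {..<m}" for j
      using w that unfolding residue_class_mod_def vec_mod_def by (auto simp: PiE_iff cong_def)
  qed (use assms in \<open>auto simp: vec_mod_def\<close>)
  moreover have "vec_mod (int p) m c \<in> residue_class_mod p m 1 c"
    using assms unfolding residue_class_mod_def vec_mod_def by (auto simp: cong_def)
  ultimately show ?thesis
    by blast
qed

lemma vec_mod_in_residue_class_mod:
  assumes "N \<ge> 1" "p > 0" and "z \<in> residue_class_mod p m (Suc N) c"
  shows "vec_mod (int p ^ N) m z \<in> residue_class_mod p m N c"
proof -
  have "int p dvd int p ^ N"
    using assms(1) by (simp add: dvd_power)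
  then have "[z j mod int p ^ N = c j] (mod int p)" if "j < m" for j
    using assms(3) that unfolding residue_class_mod_def by (auto simp: cong_def mod_mod_cancel)
  then show ?thesis
    using assms(2) unfolding residue_class_mod_def vec_mod_def by auto
qed

lemma phi_poly_in_residue_class_mod:
  assumes "N \<ge> 1" "p > 0" and "w \<in> residue_class_mod p 9 N c"
  shows "vec_mod (int p ^ N) 8 (phi_poly w) \<in> residue_class_mod p 8 N (phi_poly c)"
proof -
  have "int p dvd int p ^ N"
    using assms(1) by (simp add: dvd_power)
  then have "[phi_poly w i mod int p ^ N = phi_poly w i] (mod int p)" for i
    by (simp add: cong_def mod_mod_cancel)
  moreover have "[phi_poly w i = phi_poly c i] (mod int p)" for i
    using assms(3) by (intro phi_poly_cong) (auto simp: residue_class_mod_def)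
  ultimately have "[phi_poly w i mod int p ^ N = phi_poly c i] (mod int p)" for i
    by (rule cong_trans)
  then show ?thesis
    using assms(2) unfolding residue_class_mod_def vec_mod_def by auto
qed

lemma phi_fiber_1:
  assumes "p > 0" and "z \<in> residue_class_mod p 8 1 (phi_poly c)"
  shows "phi_fiber p 1 c z = residue_class_mod p 9 1 c"
proof -
  have "vec_mod (int p) 8 (phi_poly w) = z" if "w \<in> residue_class_mod p 9 1 c" for w
    using phi_poly_in_residue_class_mod[of 1 p w c] that assms
      residue_class_mod_1[OF assms(1), of 8 "phi_poly c"] by simp
  then show ?thesis
    unfolding phi_fiber_def by auto
qed

lemma lift_in_residue_class_mod:
  assumes "N \<ge> 1" and w: "w \<in> residue_class_mod p 9 N c"
    and t: "t \<in> PiE {..<9} (\<lambda>_. {0..<int p})"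
  shows "(\<lambda>j\<in>{..<9}. w j + int p ^ N * t j) \<in> residue_class_mod p 9 (Suc N) c"
proof -
  let ?q = "int p ^ N"
  have "w j + ?q * t j \<in> {0..<int p ^ Suc N}" if "j < 9" for j
  proof -
    have wj: "0 \<le> w j" "w j < ?q" and tj: "0 \<le> t j" "t j \<le> int p - 1"
      using w t that unfolding residue_class_mod_def by (auto simp: PiE_iff)
    have "?q * t j \<le> ?q * (int p - 1)"
      using tj by (intro mult_left_mono) auto
    then show ?thesis
      using wj tj by (simp add: algebra_simps)
  qed
  moreover have "[w j + ?q * t j = c j] (mod int p)" if "j < 9" for j
  proof -
    have "[w j + ?q * t j = w j + 0] (mod int p)"
      using assms(1) by (intro cong_add) (auto simp: cong_0_iff dvd_power)
    then show ?thesis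
      using w that unfolding residue_class_mod_def by (auto elim: cong_trans)
  qed
  ultimately show ?thesis
    unfolding residue_class_mod_def by auto
qed

lemma lift_in_phi_fiber_iff:
  assumes "N \<ge> 1" "p > 0"
    and w: "w \<in> phi_fiber p N c (vec_mod (int p ^ N) 8 z)"
    and z: "z \<in> residue_class_mod p 8 (Suc N) (phi_poly c)"
    and t: "t \<in> PiE {..<9} (\<lambda>_. {0..<int p})"
  shows "(\<lambda>j\<in>{..<9}. w j + int p ^ N * t j) \<in> phi_fiber p (Suc N) c z
     \<longleftrightarrow> t \<in> deriv_solutions p c (\<lambda>i. (z i - phi_poly w i) div int p ^ N)"
proof -
  let ?q = "int p ^ N"
  define e where "e i = (z i - phi_poly w i) div ?q" for i
  have w_class: "w \<in> residue_class_mod p 9 N c"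
    and w_phi: "vec_mod ?q 8 (phi_poly w) = vec_mod ?q 8 z"
    using w unfolding phi_fiber_def by auto
  have z_eq: "z i = phi_poly w i + ?q * e i" if "i < 8" for i
  proof -
    have "?q dvd z i - phi_poly w i"
      using w_phi that by (simp add: vec_mod_eq_vec_mod_iff cong_iff_dvd_diff dvd_diff_commute)
    then show ?thesis
      unfolding e_def by simp
  qed
  have z_box: "z \<in> PiE {..<8} (\<lambda>_. {0..<int p * ?q})"
    using z unfolding residue_class_mod_def by simp
  have w_cong: "[w j = c j] (mod int p)" if "j < 9" for j
    using w_class that unfolding residue_class_mod_def by simp
  have "int p dvd ?q" "?q \<noteq> 0"
    using assms(1,2) by (auto simp: dvd_power)
  note lift_cong = phi_poly_lift_cong_iff[OF this w_cong]
  have "(\<lambda>j\<in>{..<9}. w j + ?q * t j) \<in> phi_fiber p (Suc N) c z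
      \<longleftrightarrow> vec_mod (int p * ?q) 8 (phi_poly (\<lambda>j. w j + ?q * t j)) = z"
    using lift_in_residue_class_mod[OF assms(1) w_class t] unfolding phi_fiber_def by simp
  also have "\<dots> \<longleftrightarrow> (\<forall>i<8. [phi_deriv c t i = e i] (mod int p))"
    using z_eq by (simp add: vec_mod_eq_iff[OF z_box] lift_cong)
  also have "\<dots> \<longleftrightarrow> t \<in> deriv_solutions p c e"
    using t unfolding deriv_solutions_def by simp
  finally show ?thesis
    unfolding e_def .
qed

lemma vec_mod_in_phi_fiber:
  assumes "N \<ge> 1" "p > 0" and w: "w \<in> phi_fiber p (Suc N) c z"
  shows "vec_mod (int p ^ N) 9 w \<in> phi_fiber p N c (vec_mod (int p ^ N) 8 z)"
proof -
  let ?q = "int p ^ N"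
  have w_class: "w \<in> residue_class_mod p 9 (Suc N) c"
    and w_phi: "vec_mod (int p * ?q) 8 (phi_poly w) = z"
    using w unfolding phi_fiber_def by auto
  have "[phi_poly (vec_mod ?q 9 w) i = phi_poly w i] (mod ?q)" for i
    by (rule phi_poly_cong) (simp add: vec_mod_def cong_def)
  moreover have "[phi_poly w i = z i] (mod ?q)" if "i < 8" for i
    using w_phi that unfolding vec_mod_def cong_def by (auto simp: mod_mod_cancel)
  ultimately have "vec_mod ?q 8 (phi_poly (vec_mod ?q 9 w)) = vec_mod ?q 8 z"
    by (auto simp: vec_mod_eq_vec_mod_iff intro: cong_trans)
  then show ?thesis
    using vec_mod_in_residue_class_mod[OF assms(1,2) w_class] unfolding phi_fiber_def by simp
qed

lemma phi_fiber_Suc_vec_mod_eq_lifts: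
  assumes "N \<ge> 1" "p > 0"
    and w: "w \<in> phi_fiber p N c (vec_mod (int p ^ N) 8 z)"
    and z: "z \<in> residue_class_mod p 8 (Suc N) (phi_poly c)"
  shows "{w' \<in> phi_fiber p (Suc N) c z. vec_mod (int p ^ N) 9 w' = w}
    = (\<lambda>t. \<lambda>j\<in>{..<9}. w j + int p ^ N * t j) `
        deriv_solutions p c (\<lambda>i. (z i - phi_poly w i) div int p ^ N)"
    (is "?A = ?lift ` ?S")
proof (intro equalityI subsetI)
  let ?q = "int p ^ N"
  note lift_iff = lift_in_phi_fiber_iff[OF assms]
  fix w'
  assume w': "w' \<in> ?A"
  define t where "t = (\<lambda>j\<in>{..<9}. w' j div ?q)"
  have t_box: "t \<in> PiE {..<9} (\<lambda>_. {0..<int p})"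
    using w' assms(2) div_in_atLeastLessThan[of ?q _ "int p"]
    unfolding t_def phi_fiber_def residue_class_mod_def by (auto simp: PiE_iff mult.commute)
  have "w' = ?lift t"
  proof (rule PiE_ext)
    show "w' \<in> PiE {..<9} (\<lambda>_. UNIV)" "?lift t \<in> PiE {..<9} (\<lambda>_. UNIV)"
      using w' unfolding phi_fiber_def residue_class_mod_def by auto
    show "w' j = ?lift t j" if "j \<in> {..<9}" for j
      using w' that mult_div_mod_eq[of ?q "w' j"] unfolding t_def vec_mod_def by auto
  qed
  moreover have "t \<in> ?S"
    using w' \<open>w' = ?lift t\<close> lift_iff[OF t_box] by simp
  ultimately show "w' \<in> ?lift ` ?S"
    by blast
next
  let ?q = "int p ^ N"
  fix w'
  assume "w' \<in> ?lift ` ?S"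
  then obtain t where t: "t \<in> ?S" and w'_eq: "w' = ?lift t"
    by blast
  have w_box: "w \<in> PiE {..<9} (\<lambda>_. {0..<?q})"
    using w unfolding phi_fiber_def residue_class_mod_def by simp
  have "vec_mod ?q 9 (?lift t) = vec_mod ?q 9 w"
    by (simp add: vec_mod_eq_vec_mod_iff cong_def)
  moreover have "?lift t \<in> phi_fiber p (Suc N) c z"
    using t lift_in_phi_fiber_iff[OF assms] unfolding deriv_solutions_def by blast
  ultimately show "w' \<in> ?A"
    using vec_mod_idem[OF w_box] w'_eq by simp
qed

lemma card_phi_fiber_Suc:
  assumes "N \<ge> 1" "p > 0"
    and z: "z \<in> residue_class_mod p 8 (Suc N) (phi_poly c)"
    and deriv_card: "\<And>e. card (deriv_solutions p c e) = p"
  shows "card (phi_fiber p (Suc N) c z) = card (phi_fiber p N c (vec_mod (int p ^ N) 8 z)) * p"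
proof (rule card_eq_card_times_fiber_card)
  let ?q = "int p ^ N"
  show "vec_mod ?q 9 ` phi_fiber p (Suc N) c z \<subseteq> phi_fiber p N c (vec_mod ?q 8 z)"
    using vec_mod_in_phi_fiber[OF assms(1,2)] by blast
  fix w
  assume w: "w \<in> phi_fiber p N c (vec_mod ?q 8 z)"
  let ?lift = "\<lambda>t. \<lambda>j\<in>{..<9}. w j + ?q * t j"
  have "inj_on ?lift (deriv_solutions p c e)" for e
  proof (rule inj_onI)
    fix t t'
    assume t: "t \<in> deriv_solutions p c e" and t': "t' \<in> deriv_solutions p c e"
      and lift: "?lift t = ?lift t'"
    have "t j = t' j" if "j < 9" for j
      using fun_cong[OF lift, of j] assms(2) that by simp
    then show "t = t'"
      using t t' unfolding deriv_solutions_def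
      by (intro PiE_ext[of t "{..<9}" "\<lambda>_. {0..<int p}"]) auto
  qed
  then show "card {w' \<in> phi_fiber p (Suc N) c z. vec_mod ?q 9 w' = w} = p"
    using phi_fiber_Suc_vec_mod_eq_lifts[OF assms(1,2) w z] deriv_card by (simp add: card_image)
qed (simp_all add: finite_phi_fiber)

lemma card_phi_fiber:
  assumes "p > 0" and deriv_card: "\<And>e. card (deriv_solutions p c e) = p"
  shows "z \<in> residue_class_mod p 8 (Suc n) (phi_poly c) \<Longrightarrow> card (phi_fiber p (Suc n) c z) = p ^ n"
proof (induction n arbitrary: z)
  case 0
  then show ?case
    using phi_fiber_1[OF assms(1)] residue_class_mod_1[OF assms(1)] by simp
next
  case (Suc n)
  have "vec_mod (int p ^ Suc n) 8 z \<in> residue_class_mod p 8 (Suc n) (phi_poly c)"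
    using vec_mod_in_residue_class_mod[OF _ assms(1) Suc.prems] by simp
  then show ?case
    using card_phi_fiber_Suc[OF _ assms(1) Suc.prems deriv_card] Suc.IH by simp
qed

lemma card_phi_vimage:
  assumes "p > 0" and deriv_card: "\<And>e. card (deriv_solutions p c e) = p"
    and T: "T \<subseteq> residue_class_mod p 8 (Suc n) (phi_poly c)"
  shows "card {w \<in> residue_class_mod p 9 (Suc n) c. vec_mod (int p ^ Suc n) 8 (phi_poly w) \<in> T}
    = card T * p ^ n"
    (is "card ?A = _")
proof (rule card_eq_card_times_fiber_card[where f = "\<lambda>w. vec_mod (int p ^ Suc n) 8 (phi_poly w)"])
  show "finite T"
    using T finite_residue_class_mod by (rule finite_subset)
  fix z
  assume z: "z \<in> T"
  then have "{w \<in> ?A. vec_mod (int p ^ Suc n) 8 (phi_poly w) = z} = phi_fiber p (Suc n) c z"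
    unfolding phi_fiber_def by auto
  then show "card {w \<in> ?A. vec_mod (int p ^ Suc n) 8 (phi_poly w) = z} = p ^ n"
    using card_phi_fiber[OF assms(1,2)] T z by auto
qed (auto simp: finite_residue_class_mod)

section \<open>The linearised equations at the two residue classes\<close>

text \<open>In both cases the solutions are parametrised by the free coordinate \<open>t 6\<close>; the
  remaining coordinates are obtained by back-substitution.\<close>

lemma deriv_solutions_Fbar_ii_iff:
  "t \<in> deriv_solutions p Fbar_ii e \<longleftrightarrow> t \<in> PiE {..<9} (\<lambda>_. {0..<int p}) \<and>
     [t 0 = - e 3] (mod int p) \<and> [t 1 = - e 4] (mod int p) \<and> [t 2 = - e 5 - t 6] (mod int p) \<and>
     [t 3 = e 0] (mod int p) \<and> [t 4 = e 1] (mod int p) \<and> [t 5 = e 2] (mod int p) \<and>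
     [t 7 = - e 6] (mod int p) \<and> [t 8 = - e 7] (mod int p)"
  unfolding deriv_solutions_def
  by (simp add: phi_deriv_def phi_poly_def Fbar_ii_def algebra_simps numeral_eq_Suc All_less_Suc2
      cong_minus_left_iff cong_minus_diff_left_iff) blast

definition Fbar_ii_solution :: "int \<Rightarrow> (nat \<Rightarrow> int) \<Rightarrow> int \<Rightarrow> nat \<Rightarrow> int" where
  "Fbar_ii_solution P e s = vec_mod P 9 (\<lambda>j.
     if j = 0 then - e 3 else if j = 1 then - e 4 else if j = 2 then - e 5 - s
     else if j = 3 then e 0 else if j = 4 then e 1 else if j = 5 then e 2
     else if j = 6 then s else if j = 7 then - e 6 else - e 7)"

lemma Fbar_ii_solution_eq:
  assumes "t \<in> deriv_solutions p Fbar_ii e"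
  shows "Fbar_ii_solution (int p) e (t 6) = t"
proof -
  have box: "t \<in> PiE {..<9} (\<lambda>_. {0..<int p})"
    using assms unfolding deriv_solutions_def by simp
  show ?thesis
    using assms unfolding Fbar_ii_solution_def vec_mod_eq_iff[OF box] deriv_solutions_Fbar_ii_iff
    by (auto simp: less_Suc_eq numeral_eq_Suc intro: cong_sym)
qed

lemma Fbar_ii_solution_in_deriv_solutions:
  assumes "p > 0" and s: "s \<in> {0..<int p}"
  shows "Fbar_ii_solution (int p) e s \<in> deriv_solutions p Fbar_ii e
    \<and> Fbar_ii_solution (int p) e s 6 = s"
proof -
  define g :: "nat \<Rightarrow> int" where "g j = (if j = 0 then - e 3 else if j = 1 then - e 4
      else if j = 2 then - e 5 - s else if j = 3 then e 0 else if j = 4 then e 1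
      else if j = 5 then e 2 else if j = 6 then s else if j = 7 then - e 6 else - e 7)" for j
  define t where "t = Fbar_ii_solution (int p) e s"
  have t_eq: "t = vec_mod (int p) 9 g"
    unfolding t_def Fbar_ii_solution_def g_def ..
  have "t 6 = s"
    using s unfolding t_eq g_def vec_mod_def by simp
  moreover have g: "[t j = g j] (mod int p)" if "j < 9" for j
    unfolding t_eq using that by (rule vec_mod_cong)
  moreover have "t \<in> PiE {..<9} (\<lambda>_. {0..<int p})"
    unfolding t_eq using assms by (simp add: vec_mod_in_PiE)
  ultimately show ?thesis
    using g[of 0] g[of 1] g[of 2] g[of 3] g[of 4] g[of 5] g[of 7] g[of 8]
    unfolding t_def[symmetric] deriv_solutions_Fbar_ii_iff g_def by simp
qed

lemma card_deriv_solutions_Fbar_ii: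
  assumes "p > 0"
  shows "card (deriv_solutions p Fbar_ii e) = p"
proof -
  have "card (deriv_solutions p Fbar_ii e) = card {0..<int p}"
  proof (rule card_eq_card_if_coordinate_parametrizes)
    show "t 6 \<in> {0..<int p} \<and> Fbar_ii_solution (int p) e (t 6) = t"
      if "t \<in> deriv_solutions p Fbar_ii e" for t
      using that Fbar_ii_solution_eq by (auto simp: deriv_solutions_def PiE_iff)
  qed (rule Fbar_ii_solution_in_deriv_solutions[OF assms])
  then show ?thesis
    by simp
qed

text \<open>The redundant \<open>- 0\<close> keeps the last equation in the shape of
  \<open>cong_minus_mult_diff_left_iff\<close>.\<close>

lemma deriv_solutions_Fbar_i_iff:
  "t \<in> deriv_solutions p (Fbar_i a b c) e \<longleftrightarrow> t \<in> PiE {..<9} (\<lambda>_. {0..<int p}) \<and>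
     [- (c * t 0) - a * t 6 = e 3] (mod int p) \<and>
     [- (c * t 1) - (a * t 7 + b * t 6) = e 4] (mod int p) \<and>
     [- (c * t 2) - (b * t 7 + (c * t 6 + a * t 8)) = e 5] (mod int p) \<and>
     [t 3 = e 0] (mod int p) \<and> [t 4 = e 1] (mod int p) \<and> [t 5 = e 2] (mod int p) \<and>
     [- (c * t 7) - b * t 8 = e 6] (mod int p) \<and> [- (c * t 8) - 0 = e 7] (mod int p)"
  unfolding deriv_solutions_def
  by (simp add: phi_deriv_def phi_poly_def Fbar_i_def algebra_simps numeral_eq_Suc All_less_Suc2)
    blast

definition Fbar_i_solution ::
  "int \<Rightarrow> int \<Rightarrow> int \<Rightarrow> int \<Rightarrow> int \<Rightarrow> (nat \<Rightarrow> int) \<Rightarrow> int \<Rightarrow> nat \<Rightarrow> int" where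
  "Fbar_i_solution P a b c v e s =
    (let T8 = ((- e 7 - 0) * v) mod P; T7 = ((- e 6 - b * T8) * v) mod P in
     vec_mod P 9 (\<lambda>j.
       if j = 0 then (- e 3 - a * s) * v else if j = 1 then (- e 4 - (a * T7 + b * s)) * v
       else if j = 2 then (- e 5 - (b * T7 + (c * s + a * T8))) * v
       else if j = 3 then e 0 else if j = 4 then e 1 else if j = 5 then e 2
       else if j = 6 then s else if j = 7 then T7 else T8))"

lemma Fbar_i_solution_eq:
  assumes v: "[c * v = 1] (mod int p)" and t: "t \<in> deriv_solutions p (Fbar_i a b c) e"
  shows "Fbar_i_solution (int p) a b c v e (t 6) = t"
proof -
  let ?P = "int p"
  have box: "t \<in> PiE {..<9} (\<lambda>_. {0..<?P})"
    and c0: "[t 0 = (- e 3 - a * t 6) * v] (mod ?P)"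
    and c1: "[t 1 = (- e 4 - (a * t 7 + b * t 6)) * v] (mod ?P)"
    and c2: "[t 2 = (- e 5 - (b * t 7 + (c * t 6 + a * t 8))) * v] (mod ?P)"
    and c345: "[t 3 = e 0] (mod ?P)" "[t 4 = e 1] (mod ?P)" "[t 5 = e 2] (mod ?P)"
    and c7: "[t 7 = (- e 6 - b * t 8) * v] (mod ?P)"
    and c8: "[t 8 = (- e 7 - 0) * v] (mod ?P)"
    using t unfolding deriv_solutions_Fbar_i_iff cong_minus_mult_diff_left_iff[OF v] by blast+
  have "t 7 \<in> {0..<?P}" "t 8 \<in> {0..<?P}"
    using box by (simp_all add: PiE_iff)
  then have t7: "t 7 = ((- e 6 - b * t 8) * v) mod ?P" and t8: "t 8 = ((- e 7 - 0) * v) mod ?P"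
    using c7 c8 by (simp_all add: eq_mod_if_cong)
  show ?thesis
    unfolding Fbar_i_solution_def Let_def vec_mod_eq_iff[OF box] t8[symmetric] t7[symmetric]
    using c0 c1 c2 c345 by (auto simp: less_Suc_eq numeral_eq_Suc intro: cong_sym)
qed

lemma Fbar_i_solution_in_deriv_solutions:
  assumes "p > 0" and v: "[c * v = 1] (mod int p)" and s: "s \<in> {0..<int p}"
  shows "Fbar_i_solution (int p) a b c v e s \<in> deriv_solutions p (Fbar_i a b c) e
    \<and> Fbar_i_solution (int p) a b c v e s 6 = s"
proof -
  let ?P = "int p"
  define T8 where "T8 = ((- e 7 - 0) * v) mod ?P"
  define T7 where "T7 = ((- e 6 - b * T8) * v) mod ?P"
  define g :: "nat \<Rightarrow> int" where "g j = (if j = 0 then (- e 3 - a * s) * v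
      else if j = 1 then (- e 4 - (a * T7 + b * s)) * v
      else if j = 2 then (- e 5 - (b * T7 + (c * s + a * T8))) * v
      else if j = 3 then e 0 else if j = 4 then e 1 else if j = 5 then e 2
      else if j = 6 then s else if j = 7 then T7 else T8)" for j
  define t where "t = Fbar_i_solution ?P a b c v e s"
  have t_eq: "t = vec_mod ?P 9 g"
    unfolding t_def Fbar_i_solution_def Let_def g_def T7_def T8_def ..
  have t678: "t 6 = s" "t 7 = T7" "t 8 = T8"
    using s unfolding t_eq g_def vec_mod_def T7_def T8_def by simp_all
  have g: "[t j = g j] (mod ?P)" if "j < 9" for j
    unfolding t_eq using that by (rule vec_mod_cong)
  have "t \<in> PiE {..<9} (\<lambda>_. {0..<?P})"
    unfolding t_eq using assms by (simp add: vec_mod_in_PiE)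
  moreover have "[T7 = (- e 6 - b * T8) * v] (mod ?P)" "[T8 = (- e 7 - 0) * v] (mod ?P)"
    unfolding T7_def T8_def by (simp_all add: cong_def)
  ultimately show ?thesis
    using t678 g[of 0] g[of 1] g[of 2] g[of 3] g[of 4] g[of 5]
    unfolding t_def[symmetric] deriv_solutions_Fbar_i_iff cong_minus_mult_diff_left_iff[OF v] g_def
    by simp
qed

lemma card_deriv_solutions_Fbar_i:
  assumes "p > 0" and v: "[c * v = 1] (mod int p)"
  shows "card (deriv_solutions p (Fbar_i a b c) e) = p"
proof -
  have "card (deriv_solutions p (Fbar_i a b c) e) = card {0..<int p}"
  proof (rule card_eq_card_if_coordinate_parametrizes)
    show "t 6 \<in> {0..<int p} \<and> Fbar_i_solution (int p) a b c v e (t 6) = t"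
      if "t \<in> deriv_solutions p (Fbar_i a b c) e" for t
      using that Fbar_i_solution_eq[OF v] by (auto simp: deriv_solutions_def PiE_iff)
  qed (rule Fbar_i_solution_in_deriv_solutions[OF assms])
  then show ?thesis
    by simp
qed

lemma irreducible_bqf_mod_imp_unit:
  assumes "prime p" and "irreducible_bqf_mod p a b c"
  obtains v where "[c * v = 1] (mod int p)"
proof -
  have "\<not> int p dvd c"
  proof
    assume "int p dvd c"
    then have "a mod int p = (a * 1) mod int p \<and> b mod int p = (a * 0 + b * 1) mod int p
        \<and> c mod int p = (b * 0) mod int p"
      by simp
    then show False
      using assms(2) unfolding irreducible_bqf_mod_def by blast
  qed
  moreover have "prime (int p)"
    using assms(1) by simp
  ultimately have "coprime (int p) c"
    by (blast intro: prime_imp_coprime)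
  then have "coprime c (int p)"
    by (simp add: coprime_commute)
  then show ?thesis
    using cong_solve_coprime_int that by blast
qed

section \<open>Haar measure on \<open>\<int>\<^sub>p\<close> and \<open>\<int>\<^sub>p\<^sup>m\<close>\<close>

abbreviation int_seq_space :: "(nat \<Rightarrow> int) measure" where
  "int_seq_space \<equiv> PiM UNIV (\<lambda>_. count_space UNIV)"

abbreviation digit_seq_measure :: "nat \<Rightarrow> (nat \<Rightarrow> int) measure" where
  "digit_seq_measure p \<equiv> PiM UNIV (\<lambda>_. uniform_count_measure {0..<int p})"

lemma space_digit_seq_measure: "space (digit_seq_measure p) = {d. \<forall>i. d i \<in> {0..<int p}}"
  by (auto simp: space_PiM PiE_UNIV_domain space_uniform_count_measure)

lemma measurable_finite_dependence:
  assumes J: "finite J" "J \<subseteq> I"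
    and discrete: "\<And>i. sets (M i) = Pow (space (M i))"
    and countable: "\<And>i. countable (space (M i))"
    and depends: "\<And>x. x \<in> space (PiM I M) \<Longrightarrow> f x = g (restrict x J)"
  shows "f \<in> measurable (PiM I M) (count_space UNIV)"
proof -
  have "sets (PiM J M) = sets (PiM J (\<lambda>i. count_space (space (M i))))"
    using discrete by (intro sets_PiM_cong) auto
  also have "\<dots> = sets (count_space (PiE J (\<lambda>i. space (M i))))"
    using J(1) countable by (simp add: count_space_PiM_finite)
  finally have "measurable (PiM J M) (count_space UNIV)
      = measurable (count_space (PiE J (\<lambda>i. space (M i)))) (count_space UNIV)"
    by (rule measurable_cong_sets) simp
  moreover have "g \<in> measurable (count_space (PiE J (\<lambda>i. space (M i)))) (count_space UNIV)"
    by simp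
  ultimately have "g \<in> measurable (PiM J M) (count_space UNIV)"
    by metis
  with measurable_restrict_subset[OF J(2)]
  have "(\<lambda>x. g (restrict x J)) \<in> measurable (PiM I M) (count_space UNIV)"
    by (rule measurable_compose)
  then show ?thesis
    using depends by (simp cong: measurable_cong)
qed

lemma finite_dependence_in_sets_int_seq_space:
  assumes "finite J" and "\<And>x. Q x = Q (restrict x J)"
  shows "{x. Q x} \<in> sets int_seq_space"
proof -
  have "Q \<in> measurable int_seq_space (count_space UNIV)"
    by (rule measurable_finite_dependence[where J = J and g = Q]) (use assms in auto)
  then have "Q -` {True} \<inter> space int_seq_space \<in> sets int_seq_space"
    by (rule measurable_sets) simp
  then show ?thesis
    by (simp add: vimage_def space_PiM PiE_UNIV_domain)
qed

lemma level_set_in_sets: "{u. u n = r} \<in> sets int_seq_space"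
  by (rule finite_dependence_in_sets_int_seq_space[where J = "{n}"]) auto

definition digit :: "nat \<Rightarrow> nat \<Rightarrow> int \<Rightarrow> int" where
  "digit p i r = r div int p ^ i mod int p"

lemma mod_power_eq_sum_digits:
  assumes "p > 0"
  shows "r mod int p ^ n = (\<Sum>i<n. digit p i r * int p ^ i)"
proof (induction n)
  case (Suc n)
  have "r mod (int p ^ n * int p) = int p ^ n * (r div int p ^ n mod int p) + r mod int p ^ n"
    using assms by (simp add: zmod_zmult2_eq)
  then show ?case
    using Suc by (simp add: digit_def mult.commute)
qed simp

lemma from_digits_Suc: "from_digits p d (Suc n) = from_digits p d n + d n * int p ^ n"
  unfolding from_digits_def by simp

lemma from_digits_bounds:
  assumes "\<forall>i. d i \<in> {0..<int p}"
  shows "from_digits p d n \<in> {0..<int p ^ n}"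
proof (induction n)
  case (Suc n)
  have "d n * int p ^ n \<le> (int p - 1) * int p ^ n"
    using assms by (intro mult_right_mono) auto
  then show ?case
    using Suc assms[rule_format, of n] by (auto simp: from_digits_Suc algebra_simps)
qed (simp add: from_digits_def)

lemma from_digits_mod:
  assumes "\<forall>i. d i \<in> {0..<int p}" and "k \<le> n"
  shows "from_digits p d n mod int p ^ k = from_digits p d k"
  using assms(2)
proof (induction n)
  case (Suc n)
  show ?case
  proof (cases "k = Suc n")
    case True
    then show ?thesis
      using from_digits_bounds[OF assms(1), of k] by (simp add: mod_pos_pos_trivial)
  next
    case False
    then have "k \<le> n"
      using Suc.prems by simp
    then have "int p ^ k dvd d n * int p ^ n"
      by (simp add: le_imp_power_dvd)
    then show ?thesis
      using Suc.IH[OF \<open>k \<le> n\<close>] by (simp add: from_digits_Suc mod_add_right_eq[symmetric])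
  qed
qed (simp add: from_digits_def)

lemma from_digits_in_Zp:
  assumes "\<forall>i. d i \<in> {0..<int p}"
  shows "from_digits p d \<in> Zp p"
  unfolding Zp_def using from_digits_bounds[OF assms] from_digits_mod[OF assms] by auto

lemma from_digits_eq_iff:
  assumes p: "p > 0" and d: "\<forall>i. d i \<in> {0..<int p}" and r: "r \<in> {0..<int p ^ n}"
  shows "from_digits p d n = r \<longleftrightarrow> (\<forall>i<n. d i = digit p i r)"
proof
  assume "\<forall>i<n. d i = digit p i r"
  then have "from_digits p d n = (\<Sum>i<n. digit p i r * int p ^ i)"
    unfolding from_digits_def by (intro sum.cong) auto
  also have "\<dots> = r"
    using mod_power_eq_sum_digits[OF p, of r n] r by simp
  finally show "from_digits p d n = r" .
next
  assume r_eq: "from_digits p d n = r"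
  show "\<forall>i<n. d i = digit p i r"
  proof (intro allI impI)
    fix i
    assume "i < n"
    then have "r mod (int p ^ i * int p) = from_digits p d i + d i * int p ^ i"
      and "r mod int p ^ i = from_digits p d i"
      using from_digits_mod[OF d, of "Suc i" n] from_digits_mod[OF d, of i n] r_eq
      by (simp_all add: from_digits_Suc mult.commute)
    moreover have "r mod (int p ^ i * int p) = int p ^ i * digit p i r + r mod int p ^ i"
      using p by (simp add: zmod_zmult2_eq digit_def)
    ultimately show "d i = digit p i r"
      using p by (simp add: mult.commute)
  qed
qed

lemma prob_space_digit_seq_measure: "p > 0 \<Longrightarrow> prob_space (digit_seq_measure p)"
  by (intro prob_space_PiM prob_space_uniform_count_measure) auto

lemma measurable_from_digits: "from_digits p \<in> measurable (digit_seq_measure p) int_seq_space"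
proof -
  have "(\<lambda>d. from_digits p d n) \<in> measurable (digit_seq_measure p) (count_space UNIV)" for n
    by (rule measurable_finite_dependence[where J = "{..<n}" and g = "\<lambda>y. \<Sum>i<n. y i * int p ^ i"])
       (auto simp: space_uniform_count_measure sets_uniform_count_measure from_digits_def)
  then have "(\<lambda>d n. from_digits p d n) \<in> measurable (digit_seq_measure p) int_seq_space"
    by (intro measurable_PiM_single') (auto simp: space_PiM)
  then show ?thesis
    by simp
qed

lemma prob_space_haar_Zp: "p > 0 \<Longrightarrow> prob_space (haar_Zp p)"
  unfolding haar_Zp_def
  by (rule prob_space.prob_space_distr[OF prob_space_digit_seq_measure measurable_from_digits])

lemma sets_haar_Zp [simp]: "sets (haar_Zp p) = sets int_seq_space"
  unfolding haar_Zp_def by simp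

lemma space_haar_Zp [simp]: "space (haar_Zp p) = UNIV"
  unfolding haar_Zp_def by (simp add: space_PiM PiE_UNIV_domain)

lemma from_digits_vimage_level_set:
  assumes "p > 0" and "r \<in> {0..<int p ^ n}"
  shows "from_digits p -` {u. u n = r} \<inter> space (digit_seq_measure p) =
    prod_emb UNIV (\<lambda>_. uniform_count_measure {0..<int p}) {..<n} (PiE {..<n} (\<lambda>i. {digit p i r}))"
proof (intro equalityI subsetI)
  fix d
  assume "d \<in> from_digits p -` {u. u n = r} \<inter> space (digit_seq_measure p)"
  then have "\<forall>i. d i \<in> {0..<int p}" and "from_digits p d n = r"
    by (auto simp: space_digit_seq_measure)
  then show "d \<in> prod_emb UNIV (\<lambda>_. uniform_count_measure {0..<int p}) {..<n}
      (PiE {..<n} (\<lambda>i. {digit p i r}))"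
    using from_digits_eq_iff[OF assms(1) _ assms(2)]
    by (auto simp: prod_emb_iff space_uniform_count_measure PiE_iff)
next
  fix d
  assume "d \<in> prod_emb UNIV (\<lambda>_. uniform_count_measure {0..<int p}) {..<n}
      (PiE {..<n} (\<lambda>i. {digit p i r}))"
  then have "\<forall>i. d i \<in> {0..<int p}" and "\<forall>i<n. d i = digit p i r"
    by (auto simp: prod_emb_iff space_uniform_count_measure PiE_iff)
  then show "d \<in> from_digits p -` {u. u n = r} \<inter> space (digit_seq_measure p)"
    using from_digits_eq_iff[OF assms(1) _ assms(2)] by (simp add: space_digit_seq_measure)
qed

lemma emeasure_haar_Zp_level_set:
  assumes p: "p > 0" and r: "r \<in> {0..<int p ^ n}"
  shows "emeasure (haar_Zp p) {u. u n = r} = ennreal (1 / real p ^ n)"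
proof -
  have "emeasure (haar_Zp p) {u. u n = r} =
      emeasure (digit_seq_measure p) (from_digits p -` {u. u n = r} \<inter> space (digit_seq_measure p))"
    unfolding haar_Zp_def by (intro emeasure_distr measurable_from_digits level_set_in_sets)
  also have "\<dots> = (\<Prod>i<n. emeasure (uniform_count_measure {0..<int p}) {digit p i r})"
    unfolding from_digits_vimage_level_set[OF assms] using p
    by (intro emeasure_PiM_emb prob_space_uniform_count_measure)
       (auto simp: sets_uniform_count_measure digit_def)
  also have "\<dots> = (\<Prod>i<n. ennreal (1 / real p))"
    using p by (intro prod.cong refl) (simp add: emeasure_uniform_count_measure digit_def)
  also have "\<dots> = ennreal (1 / real p ^ n)"
    using ennreal_power[of "1 / real p" n] by (simp add: power_one_over)
  finally show ?thesis .
qed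

lemma Zp_in_sets: "Zp p \<in> sets int_seq_space"
proof -
  have "Zp p = (\<Inter>n. {x. 0 \<le> x n \<and> x n < int p ^ n \<and> x (Suc n) mod int p ^ n = x n})"
    unfolding Zp_def by auto
  also have "\<dots> \<in> sets int_seq_space"
  proof (intro sets.countable_INT'' ballI)
    show "{x. 0 \<le> x n \<and> x n < int p ^ n \<and> x (Suc n) mod int p ^ n = x n} \<in> sets int_seq_space"
      for n
      by (rule finite_dependence_in_sets_int_seq_space[where J = "{n, Suc n}"]) auto
  qed (use sets.top[of int_seq_space] in \<open>simp_all add: space_PiM PiE_UNIV_domain\<close>)
  finally show ?thesis .
qed

lemma emeasure_haar_Zp_Zp:
  assumes "p > 0"
  shows "emeasure (haar_Zp p) (Zp p) = 1"
proof -
  have "from_digits p -` Zp p \<inter> space (digit_seq_measure p) = space (digit_seq_measure p)"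
    using from_digits_in_Zp by (auto simp: space_digit_seq_measure)
  then show ?thesis
    using prob_space.emeasure_space_1[OF prob_space_digit_seq_measure[OF assms]]
    unfolding haar_Zp_def by (simp add: emeasure_distr measurable_from_digits Zp_in_sets)
qed

lemma Zp_bounds: "x \<in> Zp p \<Longrightarrow> x n \<in> {0..<int p ^ n}"
  unfolding Zp_def by auto

lemma Zp_eq_mod:
  assumes "x \<in> Zp p" and "k \<le> n"
  shows "x k = x n mod int p ^ k"
  using assms(2)
proof (induction n)
  case (Suc n)
  show ?case
  proof (cases "k = Suc n")
    case True
    then show ?thesis
      using Zp_bounds[OF assms(1), of k] by simp
  next
    case False
    then have "k \<le> n"
      using Suc.prems by simp
    moreover have "x n = x (Suc n) mod int p ^ n"
      using assms(1) unfolding Zp_def by auto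
    ultimately show ?thesis
      using Suc.IH by (simp add: mod_mod_cancel le_imp_power_dvd)
  qed
qed (use Zp_bounds[OF assms(1), of 0] in simp)

lemma prob_space_haar_Zp_vec: "p > 0 \<Longrightarrow> prob_space (haar_Zp_vec p m)"
  unfolding haar_Zp_vec_def by (intro prob_space_PiM prob_space_haar_Zp)

lemma space_haar_Zp_vec: "space (haar_Zp_vec p m) = PiE {..<m} (\<lambda>_. UNIV)"
  unfolding haar_Zp_vec_def by (simp add: space_PiM)

lemma PiE_in_sets_haar_Zp_vec:
  "(\<And>j. j < m \<Longrightarrow> A j \<in> sets int_seq_space) \<Longrightarrow> PiE {..<m} A \<in> sets (haar_Zp_vec p m)"
  unfolding haar_Zp_vec_def by (intro sets_PiM_I_finite) auto

lemma emeasure_haar_Zp_vec_PiE: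
  assumes "p > 0" and "\<And>j. j < m \<Longrightarrow> A j \<in> sets int_seq_space"
  shows "emeasure (haar_Zp_vec p m) (PiE {..<m} A) = (\<Prod>j<m. emeasure (haar_Zp p) (A j))"
proof -
  have "emeasure (haar_Zp_vec p m) (prod_emb {..<m} (\<lambda>_. haar_Zp p) {..<m} (PiE {..<m} A))
      = (\<Prod>j<m. emeasure (haar_Zp p) (A j))"
    unfolding haar_Zp_vec_def using assms by (intro emeasure_PiM_emb prob_space_haar_Zp) auto
  moreover have "prod_emb {..<m} (\<lambda>_. haar_Zp p) {..<m} (PiE {..<m} A) = PiE {..<m} A"
    by (rule prod_emb_PiE_same_index) auto
  ultimately show ?thesis
    by simp
qed

definition Zp_vec :: "nat \<Rightarrow> nat \<Rightarrow> (nat \<Rightarrow> nat \<Rightarrow> int) set" where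
  "Zp_vec p m = PiE {..<m} (\<lambda>_. Zp p)"

lemma Zp_vec_in_sets: "Zp_vec p m \<in> sets (haar_Zp_vec p m)"
  unfolding Zp_vec_def by (intro PiE_in_sets_haar_Zp_vec Zp_in_sets)

lemma AE_in_Zp_vec:
  assumes "p > 0"
  shows "AE x in haar_Zp_vec p m. x \<in> Zp_vec p m"
proof -
  interpret prob_space "haar_Zp_vec p m"
    by (rule prob_space_haar_Zp_vec[OF assms])
  have "emeasure (haar_Zp_vec p m) (Zp_vec p m) = 1"
    unfolding Zp_vec_def using assms
    by (simp add: emeasure_haar_Zp_vec_PiE Zp_in_sets emeasure_haar_Zp_Zp)
  then show ?thesis
    using Zp_vec_in_sets by (simp add: prob_eq_1 emeasure_eq_measure)
qed

lemma emeasure_haar_Zp_vec_level_set: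
  assumes "p > 0" and "z \<in> PiE {..<m} (\<lambda>_. {0..<int p ^ N})"
  shows "emeasure (haar_Zp_vec p m) (PiE {..<m} (\<lambda>j. {u. u N = z j}))
    = ennreal (1 / real p ^ (m * N))"
proof -
  have "emeasure (haar_Zp_vec p m) (PiE {..<m} (\<lambda>j. {u. u N = z j}))
      = (\<Prod>j<m. ennreal (1 / real p ^ N))"
    using assms by (auto simp: emeasure_haar_Zp_vec_PiE level_set_in_sets emeasure_haar_Zp_level_set
        PiE_iff intro!: prod.cong)
  also have "\<dots> = ennreal (1 / real p ^ (m * N))"
    using ennreal_power[of "1 / real p ^ N" m]
    by (simp add: prod_ennreal power_mult power_one_over mult.commute)
  finally show ?thesis .
qed

lemma emeasure_haar_Zp_vec_UN_level_sets:
  assumes p: "p > 0" and T: "T \<subseteq> PiE {..<m} (\<lambda>_. {0..<int p ^ N})"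
  shows "emeasure (haar_Zp_vec p m) (\<Union>z\<in>T. PiE {..<m} (\<lambda>j. {u. u N = z j}))
    = ennreal (real (card T) / real p ^ (m * N))"
proof -
  let ?C = "\<lambda>z. PiE {..<m} (\<lambda>j. {u. u N = z j})"
  have "finite T"
    by (rule finite_subset[OF T]) (intro finite_PiE, auto)
  have "disjoint_family_on ?C T"
    unfolding disjoint_family_on_def
  proof (intro ballI impI equals0I)
    fix z z' x
    assume z: "z \<in> T" and z': "z' \<in> T" and "z \<noteq> z'" and x: "x \<in> ?C z \<inter> ?C z'"
    have "z j = z' j" if "j < m" for j
      using x that by (auto simp: PiE_iff)
    moreover have "z \<in> extensional {..<m}" "z' \<in> extensional {..<m}"
      using T z z' by (auto simp: PiE_iff)
    ultimately have "z = z'"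
      by (intro extensionalityI) auto
    then show False
      using \<open>z \<noteq> z'\<close> by simp
  qed
  then have "emeasure (haar_Zp_vec p m) (\<Union>z\<in>T. ?C z) = (\<Sum>z\<in>T. emeasure (haar_Zp_vec p m) (?C z))"
    using \<open>finite T\<close>
    by (intro sum_emeasure[symmetric]) (auto intro: PiE_in_sets_haar_Zp_vec level_set_in_sets)
  also have "\<dots> = (\<Sum>z\<in>T. ennreal (1 / real p ^ (m * N)))"
    using T by (intro sum.cong refl emeasure_haar_Zp_vec_level_set[OF p]) auto
  also have "\<dots> = ennreal (real (card T) / real p ^ (m * N))"
    by (simp add: ennreal_of_nat_eq_real_of_nat ennreal_mult[symmetric])
  finally show ?thesis .
qed

lemma emeasure_haar_Zp_vec_eq_card:
  assumes p: "p > 0" and S: "S \<in> sets (haar_Zp_vec p m)"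
    and T: "T \<subseteq> PiE {..<m} (\<lambda>_. {0..<int p ^ N})"
    and S_iff: "\<And>x. x \<in> Zp_vec p m \<Longrightarrow> x \<in> S \<longleftrightarrow> (\<lambda>j\<in>{..<m}. x j N) \<in> T"
  shows "emeasure (haar_Zp_vec p m) S = ennreal (real (card T) / real p ^ (m * N))"
proof -
  let ?C = "\<lambda>z. PiE {..<m} (\<lambda>j. {u. u N = z j})"
  have "AE x in haar_Zp_vec p m. x \<in> S \<longleftrightarrow> x \<in> (\<Union>z\<in>T. ?C z)"
    using AE_in_Zp_vec[OF p]
  proof eventually_elim
    case (elim x)
    then have "x \<in> PiE {..<m} (\<lambda>_. UNIV)"
      unfolding Zp_vec_def by auto
    then have "x \<in> ?C z \<longleftrightarrow> (\<lambda>j\<in>{..<m}. x j N) = z" if "z \<in> T" for z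
      using that T by (auto simp: PiE_iff extensional_def fun_eq_iff)
    then show ?case
      using S_iff[OF elim] by auto
  qed
  moreover have "finite T"
    by (rule finite_subset[OF T]) (intro finite_PiE, auto)
  ultimately have "emeasure (haar_Zp_vec p m) S = emeasure (haar_Zp_vec p m) (\<Union>z\<in>T. ?C z)"
    using S by (intro emeasure_eq_AE sets.finite_UN PiE_in_sets_haar_Zp_vec level_set_in_sets) auto
  then show ?thesis
    using emeasure_haar_Zp_vec_UN_level_sets[OF p T] by simp
qed

definition cylinder :: "nat \<Rightarrow> nat \<Rightarrow> (nat \<Rightarrow> nat \<Rightarrow> int) \<Rightarrow> (nat \<Rightarrow> nat \<Rightarrow> int) set" where
  "cylinder m n y = PiE {..<m} (\<lambda>j. {u. \<forall>k<n. u k = y j k})"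

definition cylinders :: "nat \<Rightarrow> (nat \<Rightarrow> nat \<Rightarrow> int) set set" where
  "cylinders m = insert {} {cylinder m n y | n y. True}"

lemma cylinder_in_sets: "cylinder m n y \<in> sets (haar_Zp_vec p m)"
  unfolding cylinder_def
  by (intro PiE_in_sets_haar_Zp_vec finite_dependence_in_sets_int_seq_space[where J = "{..<n}"])
    auto

lemma cylinders_subset_Pow: "cylinders m \<subseteq> Pow (PiE {..<m} (\<lambda>_. UNIV))"
  unfolding cylinders_def cylinder_def by (auto simp: PiE_iff)

lemma cylinder_0: "cylinder m 0 y = PiE {..<m} (\<lambda>_. UNIV)"
  unfolding cylinder_def by simp

lemma Int_stable_cylinders: "Int_stable (cylinders m)"
proof (rule Int_stableI)
  fix A B
  assume A: "A \<in> cylinders m" and B: "B \<in> cylinders m"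
  show "A \<inter> B \<in> cylinders m"
  proof (cases "A \<inter> B = {}")
    case False
    then obtain x where x: "x \<in> A \<inter> B"
      by blast
    obtain n y n' y' where A_eq: "A = cylinder m n y" and B_eq: "B = cylinder m n' y'"
      using A B False unfolding cylinders_def by auto
    have "A \<inter> B = cylinder m (max n n') x"
      using x unfolding A_eq B_eq cylinder_def by (auto simp: PiE_iff less_max_iff_disj)
    then show ?thesis
      unfolding cylinders_def by blast
  qed (simp add: cylinders_def)
qed

lemma measurable_coordinate_sigma_cylinders:
  assumes j: "j < m"
  shows "(\<lambda>x. x j k) \<in> measurable (sigma (PiE {..<m} (\<lambda>_. UNIV)) (cylinders m)) (count_space UNIV)"
proof (subst measurable_count_space_eq2_countable, intro conjI ballI)
  let ?\<Sigma> = "sigma (PiE {..<m} (\<lambda>_. UNIV)) (cylinders m)"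
  have space_\<Sigma>: "space ?\<Sigma> = PiE {..<m} (\<lambda>_. UNIV)"
    using cylinders_subset_Pow by simp
  show "(\<lambda>x. x j k) \<in> space ?\<Sigma> \<rightarrow> UNIV"
    by simp
  fix a :: int
  define Y where "Y = {y \<in> PiE {..<m} (\<lambda>_. PiE {..<Suc k} (\<lambda>_. UNIV :: int set)). y j k = a}"
  have "(\<lambda>x. x j k) -` {a} \<inter> space ?\<Sigma> = (\<Union>y\<in>Y. cylinder m (Suc k) y)"
  proof (intro equalityI subsetI)
    fix x
    assume x: "x \<in> (\<lambda>x. x j k) -` {a} \<inter> space ?\<Sigma>"
    define y where "y = (\<lambda>j'\<in>{..<m}. restrict (x j') {..<Suc k})"
    have "y \<in> Y"
      using x j unfolding Y_def y_def by auto
    moreover have "x \<in> cylinder m (Suc k) y"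
      using x space_\<Sigma> unfolding cylinder_def y_def by (auto simp: PiE_iff)
    ultimately show "x \<in> (\<Union>y\<in>Y. cylinder m (Suc k) y)"
      by blast
  next
    fix x
    assume "x \<in> (\<Union>y\<in>Y. cylinder m (Suc k) y)"
    then show "x \<in> (\<lambda>x. x j k) -` {a} \<inter> space ?\<Sigma>"
      using j space_\<Sigma> unfolding Y_def cylinder_def by (auto simp: PiE_iff)
  qed
  moreover have "countable Y"
    unfolding Y_def
    by (rule countable_subset[OF _ countable_PiE[of "{..<m}" "\<lambda>_. PiE {..<Suc k} (\<lambda>_. UNIV)"]])
       (auto intro!: countable_PiE)
  then have "(\<Union>y\<in>Y. cylinder m (Suc k) y) \<in> sets ?\<Sigma>"
  proof (rule sets.countable_UN'')
    show "cylinder m (Suc k) y \<in> sets ?\<Sigma>" for y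
      using cylinders_subset_Pow unfolding cylinders_def by auto
  qed
  ultimately show "(\<lambda>x. x j k) -` {a} \<inter> space ?\<Sigma> \<in> sets ?\<Sigma>"
    by simp
qed

lemma sets_haar_Zp_vec_eq_sigma_cylinders:
  "sets (haar_Zp_vec p m) = sigma_sets (PiE {..<m} (\<lambda>_. UNIV)) (cylinders m)"
proof
  let ?\<Omega> = "PiE {..<m} (\<lambda>_. UNIV) :: (nat \<Rightarrow> nat \<Rightarrow> int) set"
  let ?\<Sigma> = "sigma ?\<Omega> (cylinders m)"
  have "cylinders m \<subseteq> sets (haar_Zp_vec p m)"
    unfolding cylinders_def using cylinder_in_sets by auto
  from sets.sigma_sets_subset[OF this]
  show "sigma_sets ?\<Omega> (cylinders m) \<subseteq> sets (haar_Zp_vec p m)"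
    by (simp add: space_haar_Zp_vec)
  have "(\<lambda>x. x) \<in> measurable ?\<Sigma> (haar_Zp_vec p m)"
    unfolding haar_Zp_vec_def
  proof (rule measurable_PiM_single')
    fix j
    assume "j \<in> {..<m}"
    then have "(\<lambda>x. x j) \<in> measurable ?\<Sigma> int_seq_space"
      by (intro measurable_PiM_single' measurable_coordinate_sigma_cylinders) auto
    then show "(\<lambda>x. x j) \<in> measurable ?\<Sigma> (haar_Zp p)"
      by (subst measurable_cong_sets[OF refl sets_haar_Zp])
  qed (use cylinders_subset_Pow in simp)
  show "sets (haar_Zp_vec p m) \<subseteq> sigma_sets ?\<Omega> (cylinders m)"
  proof
    fix A
    assume A: "A \<in> sets (haar_Zp_vec p m)"
    have "(\<lambda>x. x) -` A \<inter> space ?\<Sigma> \<in> sets ?\<Sigma>"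
      by (rule measurable_sets[OF \<open>(\<lambda>x. x) \<in> measurable ?\<Sigma> (haar_Zp_vec p m)\<close> A])
    moreover have "(\<lambda>x. x) -` A \<inter> space ?\<Sigma> = A"
      using sets.sets_into_space[OF A] cylinders_subset_Pow by (auto simp: space_haar_Zp_vec)
    ultimately show "A \<in> sigma_sets ?\<Omega> (cylinders m)"
      using cylinders_subset_Pow by simp
  qed
qed

lemma residue_class_eq: "residue_class p m c = {x \<in> Zp_vec p m. \<forall>j<m. x j 1 = c j mod int p}"
  unfolding residue_class_def Zp_vec_def ..

lemma residue_class_as_PiE:
  "residue_class p m c = PiE {..<m} (\<lambda>j. Zp p \<inter> {u. u 1 = c j mod int p})"
  unfolding residue_class_def PiE_def Pi_def by auto

lemma residue_class_in_sets: "residue_class p m c \<in> sets (haar_Zp_vec p m)"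
  unfolding residue_class_as_PiE
  by (intro PiE_in_sets_haar_Zp_vec sets.Int Zp_in_sets level_set_in_sets)

lemma residue_class_iff_level:
  assumes "N \<ge> 1" and x: "x \<in> Zp_vec p m"
  shows "x \<in> residue_class p m c \<longleftrightarrow> (\<lambda>j\<in>{..<m}. x j N) \<in> residue_class_mod p m N c"
proof -
  have "x j \<in> Zp p" if "j < m" for j
    using x that unfolding Zp_vec_def by auto
  then have "x j 1 = x j N mod int p" and "x j N \<in> {0..<int p ^ N}" if "j < m" for j
    using that assms(1) Zp_eq_mod[of "x j" p 1 N] Zp_bounds by auto
  then show ?thesis
    using x unfolding residue_class_eq residue_class_mod_def cong_def by auto
qed

lemma emeasure_residue_class:
  assumes "p > 0"
  shows "emeasure (haar_Zp_vec p m) (residue_class p m c) = ennreal (1 / real p ^ m)"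
proof -
  have "emeasure (haar_Zp_vec p m) (residue_class p m c)
      = ennreal (real (card (residue_class_mod p m 1 c)) / real p ^ (m * 1))"
  proof (rule emeasure_haar_Zp_vec_eq_card[OF assms residue_class_in_sets])
    show "residue_class_mod p m 1 c \<subseteq> PiE {..<m} (\<lambda>_. {0..<int p ^ 1})"
      unfolding residue_class_mod_def by auto
  qed (simp add: residue_class_iff_level)
  then show ?thesis
    using residue_class_mod_1[OF assms] by simp
qed

lemma measurable_coordinate_haar_Zp_vec:
  assumes "j < m"
  shows "(\<lambda>x. x j n) \<in> measurable (haar_Zp_vec p m) (count_space UNIV)"
proof -
  have "(\<lambda>x. x j) \<in> measurable (haar_Zp_vec p m) (haar_Zp p)"
    unfolding haar_Zp_vec_def by (rule measurable_component_singleton) (use assms in simp)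
  then have "(\<lambda>x. x j) \<in> measurable (haar_Zp_vec p m) int_seq_space"
    by (subst measurable_cong_sets[OF refl sets_haar_Zp[symmetric]])
  then show ?thesis
    by (rule measurable_compose) (rule measurable_component_singleton, simp)
qed

lemma measurable_Phi: "Phi p \<in> measurable (haar_Zp_vec p 9) (haar_Zp_vec p 8)"
  unfolding Phi_def haar_Zp_vec_def[of p 8]
proof (rule measurable_restrict)
  fix i :: nat
  have "(\<lambda>x. phi_poly (\<lambda>j. x j n) i mod int p ^ n)
      \<in> measurable (haar_Zp_vec p 9) (count_space UNIV)" for n
  proof -
    have "(\<lambda>x. \<lambda>j\<in>{..<9}. x j n)
        \<in> measurable (haar_Zp_vec p 9) (PiM {..<9} (\<lambda>_. count_space (UNIV :: int set)))"
      by (intro measurable_restrict measurable_coordinate_haar_Zp_vec) simp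
    moreover have "(\<lambda>y. phi_poly y i mod int p ^ n)
        \<in> measurable (PiM {..<9} (\<lambda>_. count_space (UNIV :: int set))) (count_space UNIV)"
      by (rule measurable_finite_dependence[where J = "{..<9}"
            and g = "\<lambda>y. phi_poly y i mod int p ^ n"]) (auto simp: space_PiM)
    ultimately have "(\<lambda>x. phi_poly (\<lambda>j\<in>{..<9}. x j n) i mod int p ^ n)
        \<in> measurable (haar_Zp_vec p 9) (count_space UNIV)"
      by (rule measurable_compose)
    then show ?thesis
      by (simp only: phi_poly_restrict)
  qed
  then have "(\<lambda>x n. phi_poly (\<lambda>j. x j n) i mod int p ^ n)
      \<in> measurable (haar_Zp_vec p 9) int_seq_space"
    by (rule measurable_PiM_single') simp
  then show "(\<lambda>x n. phi_poly (\<lambda>j. x j n) i mod int p ^ n)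
      \<in> measurable (haar_Zp_vec p 9) (haar_Zp p)"
    by (subst measurable_cong_sets[OF refl sets_haar_Zp])
qed

lemma Phi_level: "(\<lambda>i\<in>{..<8}. Phi p x i N) = vec_mod (int p ^ N) 8 (phi_poly (\<lambda>j. x j N))"
  unfolding Phi_def vec_mod_def by (auto simp: fun_eq_iff)

lemma Phi_in_Zp_vec:
  assumes "p > 0" and "x \<in> Zp_vec p 9"
  shows "Phi p x \<in> Zp_vec p 8"
proof -
  have x: "x j \<in> Zp p" if "j < 9" for j
    using assms(2) that unfolding Zp_vec_def by auto
  have "(\<lambda>n. phi_poly (\<lambda>j. x j n) i mod int p ^ n) \<in> Zp p" for i
    unfolding Zp_def
  proof (intro CollectI allI conjI)
    fix n
    have "int p ^ n > 0"
      using assms(1) by simp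
    then show "0 \<le> phi_poly (\<lambda>j. x j n) i mod int p ^ n"
      "phi_poly (\<lambda>j. x j n) i mod int p ^ n < int p ^ n"
      by simp_all
    have "[phi_poly (\<lambda>j. x j (Suc n)) i = phi_poly (\<lambda>j. x j n) i] (mod int p ^ n)"
      by (rule phi_poly_cong) (use x Zp_eq_mod in \<open>auto simp: cong_def\<close>)
    then show "phi_poly (\<lambda>j. x j (Suc n)) i mod int p ^ Suc n mod int p ^ n
        = phi_poly (\<lambda>j. x j n) i mod int p ^ n"
      by (simp add: cong_def mod_mod_cancel le_imp_power_dvd)
  qed
  then show ?thesis
    unfolding Zp_vec_def Phi_def by auto
qed

lemma Phi_residue_class:
  assumes "p > 0" and x: "x \<in> residue_class p 9 c"
  shows "Phi p x \<in> residue_class p 8 (phi_poly c)"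
proof -
  have x_Zp: "x \<in> Zp_vec p 9"
    using x unfolding residue_class_eq by simp
  then have "(\<lambda>j\<in>{..<9}. x j 1) \<in> residue_class_mod p 9 1 c"
    using x residue_class_iff_level[of 1 x] by simp
  then have "vec_mod (int p ^ 1) 8 (phi_poly (\<lambda>j\<in>{..<9}. x j 1))
      \<in> residue_class_mod p 8 1 (phi_poly c)"
    using phi_poly_in_residue_class_mod[OF _ assms(1)] by blast
  then have "(\<lambda>i\<in>{..<8}. Phi p x i 1) \<in> residue_class_mod p 8 1 (phi_poly c)"
    by (simp only: Phi_level phi_poly_restrict)
  then show ?thesis
    using residue_class_iff_level[OF order_refl Phi_in_Zp_vec[OF assms(1) x_Zp]] by blast
qed

definition cylinder_residues ::
  "nat \<Rightarrow> nat \<Rightarrow> (nat \<Rightarrow> int) \<Rightarrow> nat \<Rightarrow> (nat \<Rightarrow> nat \<Rightarrow> int) \<Rightarrow> (nat \<Rightarrow> int) set" where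
  "cylinder_residues p m d n y =
     {z \<in> residue_class_mod p m (Suc n) d. \<forall>j<m. \<forall>k<n. y j k = z j mod int p ^ k}"

lemma residue_class_Int_cylinder_iff:
  assumes x: "x \<in> Zp_vec p m"
  shows "x \<in> residue_class p m d \<inter> cylinder m n y
    \<longleftrightarrow> (\<lambda>j\<in>{..<m}. x j (Suc n)) \<in> cylinder_residues p m d n y"
proof -
  have "x j k = x j (Suc n) mod int p ^ k" if "j < m" "k < n" for j k
    using x that Zp_eq_mod[of "x j" p k "Suc n"] unfolding Zp_vec_def by auto
  then have "x \<in> cylinder m n y \<longleftrightarrow> (\<forall>j<m. \<forall>k<n. y j k = x j (Suc n) mod int p ^ k)"
    using x unfolding cylinder_def Zp_vec_def by (auto simp: PiE_iff)
  then show ?thesis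
    using residue_class_iff_level[of "Suc n" x p m d] x unfolding cylinder_residues_def by auto
qed

lemma emeasure_residue_class_Int_cylinder:
  assumes "p > 0"
  shows "emeasure (haar_Zp_vec p m) (residue_class p m d \<inter> cylinder m n y)
    = ennreal (real (card (cylinder_residues p m d n y)) / real p ^ (m * Suc n))"
proof (rule emeasure_haar_Zp_vec_eq_card[OF assms])
  show "residue_class p m d \<inter> cylinder m n y \<in> sets (haar_Zp_vec p m)"
    using residue_class_in_sets cylinder_in_sets by blast
  show "cylinder_residues p m d n y \<subseteq> PiE {..<m} (\<lambda>_. {0..<int p ^ Suc n})"
    unfolding cylinder_residues_def residue_class_mod_def by blast
qed (rule residue_class_Int_cylinder_iff)

lemma emeasure_uniform_measure_residue_class:
  assumes "p > 0" and X: "X \<in> sets (haar_Zp_vec p m)"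
    and r: "emeasure (haar_Zp_vec p m) (residue_class p m c \<inter> X) = ennreal r" "r \<ge> 0"
  shows "emeasure (uniform_measure (haar_Zp_vec p m) (residue_class p m c)) X
    = ennreal (r * real p ^ m)"
proof -
  have "emeasure (uniform_measure (haar_Zp_vec p m) (residue_class p m c)) X
      = ennreal r / ennreal (1 / real p ^ m)"
    using assms by (simp add: residue_class_in_sets emeasure_residue_class)
  also have "\<dots> = ennreal (r * real p ^ m)"
    using assms by (simp add: divide_ennreal)
  finally show ?thesis .
qed

lemma emeasure_residue_class_Int_Phi_vimage_cylinder:
  assumes "p > 0" and deriv_card: "\<And>e. card (deriv_solutions p c e) = p"
  shows "emeasure (haar_Zp_vec p 9)
      (residue_class p 9 c \<inter> (Phi p -` cylinder 8 n y \<inter> space (haar_Zp_vec p 9)))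
    = ennreal (real (card (cylinder_residues p 8 (phi_poly c) n y) * p ^ n) / real p ^ (9 * Suc n))"
proof -
  let ?T = "cylinder_residues p 8 (phi_poly c) n y"
  let ?q = "int p ^ Suc n"
  define T9 where "T9 = {w \<in> residue_class_mod p 9 (Suc n) c. vec_mod ?q 8 (phi_poly w) \<in> ?T}"
  have "card T9 = card ?T * p ^ n"
    unfolding T9_def using assms by (intro card_phi_vimage) (auto simp: cylinder_residues_def)
  moreover have "emeasure (haar_Zp_vec p 9)
      (residue_class p 9 c \<inter> (Phi p -` cylinder 8 n y \<inter> space (haar_Zp_vec p 9)))
    = ennreal (real (card T9) / real p ^ (9 * Suc n))"
  proof (rule emeasure_haar_Zp_vec_eq_card[OF assms(1)])
    show "residue_class p 9 c \<inter> (Phi p -` cylinder 8 n y \<inter> space (haar_Zp_vec p 9))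
        \<in> sets (haar_Zp_vec p 9)"
      using residue_class_in_sets measurable_sets[OF measurable_Phi cylinder_in_sets] by blast
    show "T9 \<subseteq> PiE {..<9} (\<lambda>_. {0..<int p ^ Suc n})"
      unfolding T9_def residue_class_mod_def by blast
    fix x
    assume x: "x \<in> Zp_vec p 9"
    have "Phi p x \<in> cylinder 8 n y \<longleftrightarrow> vec_mod ?q 8 (phi_poly (\<lambda>j. x j (Suc n))) \<in> ?T"
      if "x \<in> residue_class p 9 c"
      using residue_class_Int_cylinder_iff[OF Phi_in_Zp_vec[OF assms(1) x], of "phi_poly c" n y]
        Phi_residue_class[OF assms(1) that]
      by (simp add: Phi_level)
    moreover have "x \<in> space (haar_Zp_vec p 9)"
      using x unfolding Zp_vec_def space_haar_Zp_vec by auto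
    ultimately show "x \<in> residue_class p 9 c \<inter> (Phi p -` cylinder 8 n y \<inter> space (haar_Zp_vec p 9))
        \<longleftrightarrow> (\<lambda>j\<in>{..<9}. x j (Suc n)) \<in> T9"
      using residue_class_iff_level[OF _ x, of "Suc n" c] unfolding T9_def by auto
  qed
  ultimately show ?thesis
    by simp
qed

lemma measurable_Phi_uniform_measure:
  "Phi p \<in> measurable (uniform_measure (haar_Zp_vec p 9) (residue_class p 9 c))
    (uniform_measure (haar_Zp_vec p 8) (residue_class p 8 (phi_poly c)))"
  using measurable_Phi by (subst measurable_cong_sets[OF sets_uniform_measure sets_uniform_measure])

lemma emeasure_distr_Phi_cylinder:
  assumes "p > 0" and deriv_card: "\<And>e. card (deriv_solutions p c e) = p"
  shows "emeasure (distr (uniform_measure (haar_Zp_vec p 9) (residue_class p 9 c))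
      (uniform_measure (haar_Zp_vec p 8) (residue_class p 8 (phi_poly c))) (Phi p)) (cylinder 8 n y)
    = emeasure (uniform_measure (haar_Zp_vec p 8) (residue_class p 8 (phi_poly c)))
        (cylinder 8 n y)"
    (is "emeasure (distr ?M9 ?M8 _) _ = _")
proof -
  let ?k = "real (card (cylinder_residues p 8 (phi_poly c) n y))"
  have "emeasure (distr ?M9 ?M8 (Phi p)) (cylinder 8 n y)
      = emeasure ?M9 (Phi p -` cylinder 8 n y \<inter> space (haar_Zp_vec p 9))"
    using measurable_Phi_uniform_measure cylinder_in_sets by (simp add: emeasure_distr)
  also have "\<dots> = ennreal (?k * real p ^ n / real p ^ (9 * Suc n) * real p ^ 9)"
    using assms emeasure_residue_class_Int_Phi_vimage_cylinder[OF assms]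
      measurable_sets[OF measurable_Phi cylinder_in_sets]
    by (intro emeasure_uniform_measure_residue_class) auto
  also have "?k * real p ^ n / real p ^ (9 * Suc n) * real p ^ 9
      = ?k / real p ^ (8 * Suc n) * real p ^ 8"
  proof -
    have "9 * Suc n = 8 * n + n + 9" "8 * Suc n = 8 * n + 8"
      by simp_all
    then have "real p ^ (9 * Suc n) = real p ^ (8 * n) * real p ^ n * real p ^ 9"
      "real p ^ (8 * Suc n) = real p ^ (8 * n) * real p ^ 8"
      by (simp_all only: power_add)
    then show ?thesis
      using assms(1) by simp
  qed
  also have "ennreal (?k / real p ^ (8 * Suc n) * real p ^ 8) = emeasure ?M8 (cylinder 8 n y)"
    using assms(1) emeasure_residue_class_Int_cylinder[OF assms(1)] cylinder_in_sets
    by (intro emeasure_uniform_measure_residue_class[symmetric]) auto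
  finally show ?thesis .
qed

lemma measure_preserving_Phi:
  assumes "p > 0" and deriv_card: "\<And>e. card (deriv_solutions p c e) = p"
  shows "measure_preserving_map
    (uniform_measure (haar_Zp_vec p 9) (residue_class p 9 c))
    (uniform_measure (haar_Zp_vec p 8) (residue_class p 8 (phi_poly c))) (Phi p)"
proof -
  let ?M9 = "uniform_measure (haar_Zp_vec p 9) (residue_class p 9 c)"
  let ?M8 = "uniform_measure (haar_Zp_vec p 8) (residue_class p 8 (phi_poly c))"
  interpret M8: prob_space ?M8
    using assms(1) by (intro prob_space_uniform_measure)
      (simp_all add: residue_class_in_sets emeasure_residue_class)
  note on_cylinders = emeasure_distr_Phi_cylinder[OF assms]
  have "distr ?M9 ?M8 (Phi p) = ?M8"
  proof (rule measure_eqI_generator_eq[where \<Omega> = "PiE {..<8} (\<lambda>_. UNIV)" and E = "cylinders 8"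
        and A = "\<lambda>_. cylinder 8 0 (\<lambda>_ _. 0)"])
    show "emeasure (distr ?M9 ?M8 (Phi p)) X = emeasure ?M8 X" if "X \<in> cylinders 8" for X
      using that on_cylinders unfolding cylinders_def by auto
    show "sets (distr ?M9 ?M8 (Phi p)) = sigma_sets (PiE {..<8} (\<lambda>_. UNIV)) (cylinders 8)"
      "sets ?M8 = sigma_sets (PiE {..<8} (\<lambda>_. UNIV)) (cylinders 8)"
      using sets_haar_Zp_vec_eq_sigma_cylinders by simp_all
    show "range (\<lambda>_. cylinder 8 0 (\<lambda>_ _. 0)) \<subseteq> cylinders 8"
      unfolding cylinders_def by blast
    show "emeasure (distr ?M9 ?M8 (Phi p)) (cylinder 8 0 (\<lambda>_ _. 0)) \<noteq> \<infinity>" for i :: nat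
      using on_cylinders M8.emeasure_finite by simp
  qed (simp_all add: Int_stable_cylinders cylinders_subset_Pow cylinder_0)
  then show ?thesis
    unfolding measure_preserving_map_def using measurable_Phi_uniform_measure by simp
qed

theorem lemma5p3:
  fixes p :: nat and Fbar :: "nat \<Rightarrow> int"
  assumes "prime p"
    and "(\<exists>a b c. irreducible_bqf_mod p a b c \<and> Fbar = Fbar_i a b c) \<or> Fbar = Fbar_ii"
  shows "Phi p ` residue_class p 9 Fbar \<subseteq> residue_class p 8 (phi_poly Fbar)
    \<and> measure_preserving_map
        (uniform_measure (haar_Zp_vec p 9) (residue_class p 9 Fbar))
        (uniform_measure (haar_Zp_vec p 8) (residue_class p 8 (phi_poly Fbar)))
        (Phi p)"
proof -
  have p: "p > 0"
    using assms(1) by (simp add: prime_gt_0_nat)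
  have "card (deriv_solutions p Fbar e) = p" for e
    using assms(2)
  proof
    assume "\<exists>a b c. irreducible_bqf_mod p a b c \<and> Fbar = Fbar_i a b c"
    then obtain a b c v where "Fbar = Fbar_i a b c" and "[c * v = 1] (mod int p)"
      using irreducible_bqf_mod_imp_unit[OF assms(1)] by metis
    then show ?thesis
      using card_deriv_solutions_Fbar_i[OF p] by simp
  qed (simp add: card_deriv_solutions_Fbar_ii[OF p])
  then show ?thesis
    using Phi_residue_class[OF p] measure_preserving_Phi[OF p] by blast
qed

end
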